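(* Let $\mathbf P=(P,\leq,{}',0,1)$ be an orthogonal lub-complete poset. Then the following conditions are equivalent: (i) $\mathbf P$ is a Boolean algebra. (ii) $\mathbf P$ satisfies $x\leq y$ if and only if $x\rightarrow_C y=1$ for all $x,y\in P$. (iii) $\mathbf P$ is an orthocomplemented poset such that there exists a binary operator $\odot_C$ such that $x\odot_C y\leq_1 z$ if and only if $x\leq_2 y\rightarrow_C z$ for all $x,y,z\in P$.
   Context: $(P,\leq,{}',0,1)$ is a bounded poset with an antitone involution ${}'$; orthogonal means $x\leq y'$ implies $x\vee y$ exists; lub-complete means for every lower bound $x$ of a finite subset $M$ there is a maximal lower bound of $M$ above $x$; orthocomplemented means $x\vee x'=1$ for all $x$. For $A\subseteq P$, $U(A)$ is the set of upper bounds, $U(x,y)=U(\{x,y\})$, $\mathrm{Min}\,A$ is the set of minimal elements of $A$. The classical implication is $x\rightarrow_C y:=\mathrm{Min}\,U(x',y)$; $x\rightarrow_C y=1$ means it equals $\{1\}$. $\odot_C$ is a map $P^2\to 2^P$. For $A,B\subseteq P$: $A\leq_1 B$ means for every $x\in A$ there is $y\in B$ with $x\leq y$; $A\leq_2 B$ means for every $y\in B$ there is $x\in A$ with $x\leq y$. *)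

theory Defs
  imports Main
begin

text \<open>The poset is the type 'a with its order; cmp is the antitone involution,
  zero and one are the bounds.\<close>

definition UB :: "'a::order set \<Rightarrow> 'a set" where
  "UB A = {u. \<forall>a\<in>A. a \<le> u}"

definition LB :: "'a::order set \<Rightarrow> 'a set" where
  "LB A = {l. \<forall>a\<in>A. l \<le> a}"

definition MinS :: "'a::order set \<Rightarrow> 'a set" where
  "MinS A = {x\<in>A. \<forall>y\<in>A. y \<le> x \<longrightarrow> y = x}"

definition MaxS :: "'a::order set \<Rightarrow> 'a set" where
  "MaxS A = {x\<in>A. \<forall>y\<in>A. x \<le> y \<longrightarrow> y = x}"

definition is_lub :: "'a::order set \<Rightarrow> 'a \<Rightarrow> bool" where
  "is_lub A s \<longleftrightarrow> s \<in> UB A \<and> (\<forall>u\<in>UB A. s \<le> u)"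

definition is_glb :: "'a::order set \<Rightarrow> 'a \<Rightarrow> bool" where
  "is_glb A s \<longleftrightarrow> s \<in> LB A \<and> (\<forall>l\<in>LB A. l \<le> s)"

definition join :: "'a::order \<Rightarrow> 'a \<Rightarrow> 'a" where
  "join x y = (THE s. is_lub {x, y} s)"

definition meet :: "'a::order \<Rightarrow> 'a \<Rightarrow> 'a" where
  "meet x y = (THE s. is_glb {x, y} s)"

definition bounded_inv_poset :: "('a::order \<Rightarrow> 'a) \<Rightarrow> 'a \<Rightarrow> 'a \<Rightarrow> bool" where
  "bounded_inv_poset cmp zero one \<longleftrightarrow>
     (\<forall>x. zero \<le> x \<and> x \<le> one) \<and>
     (\<forall>x y. x \<le> y \<longrightarrow> cmp y \<le> cmp x) \<and>
     (\<forall>x. cmp (cmp x) = x)"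

definition orthogonal :: "('a::order \<Rightarrow> 'a) \<Rightarrow> bool" where
  "orthogonal cmp \<longleftrightarrow> (\<forall>x y. x \<le> cmp y \<longrightarrow> (\<exists>s. is_lub {x, y} s))"

definition lub_complete :: "'a::order itself \<Rightarrow> bool" where
  "lub_complete (T::'a itself) \<longleftrightarrow>
     (\<forall>M::'a set. finite M \<longrightarrow> (\<forall>x\<in>LB M. \<exists>w\<in>MaxS (LB M). x \<le> w))"

definition orthocomplemented :: "('a::order \<Rightarrow> 'a) \<Rightarrow> 'a \<Rightarrow> bool" where
  "orthocomplemented cmp one \<longleftrightarrow> (\<forall>x. is_lub {x, cmp x} one)"

definition impC :: "('a::order \<Rightarrow> 'a) \<Rightarrow> 'a \<Rightarrow> 'a \<Rightarrow> 'a set" where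
  "impC cmp x y = MinS (UB {cmp x, y})"

definition le1 :: "'a::order set \<Rightarrow> 'a set \<Rightarrow> bool" where
  "le1 A B \<longleftrightarrow> (\<forall>x\<in>A. \<exists>y\<in>B. x \<le> y)"

definition le2 :: "'a::order set \<Rightarrow> 'a set \<Rightarrow> bool" where
  "le2 A B \<longleftrightarrow> (\<forall>y\<in>B. \<exists>x\<in>A. x \<le> y)"

definition boolean_algebra_poset :: "('a::order \<Rightarrow> 'a) \<Rightarrow> 'a \<Rightarrow> 'a \<Rightarrow> bool" where
  "boolean_algebra_poset cmp zero one \<longleftrightarrow>
     (\<forall>x y::'a. \<exists>s. is_lub {x, y} s) \<and>
     (\<forall>x y::'a. \<exists>s. is_glb {x, y} s) \<and>
     (\<forall>x y z::'a. join x (meet y z) = meet (join x y) (join x z)) \<and>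
     (\<forall>x. join x (cmp x) = one \<and> meet x (cmp x) = zero)"

end

theory Submission
  imports Defs
begin

text \<open>In a lub-complete poset every upper bound lies above a minimal one, so
  \<open>x \<rightarrow>\<^sub>C y = 1\<close> says that \<open>1\<close> is the only upper bound of \<open>x'\<close> and \<open>y\<close>, i.e. that
  \<open>0\<close> is the only lower bound of \<open>x\<close> and \<open>y'\<close>. Hence (ii) is the criterion
  \<open>x \<le> y \<longleftrightarrow> x \<and> y' = 0\<close>. Given this criterion and orthogonality, a minimal upper
  bound of \<open>x, y\<close> must be their supremum, so \<open>P\<close> is an ortholattice in which
  \<open>x \<and> y \<le> z \<longleftrightarrow> x \<le> y' \<or> z\<close>. This residuation makes the lattice distributive,
  giving (i), and \<open>x \<odot>\<^sub>C y := {x \<and> y}\<close> gives (iii). Conversely the criterion holds in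
  every Boolean algebra, and under (iii) the set \<open>y \<odot>\<^sub>C z'\<close> lies below both \<open>y\<close> and \<open>y'\<close>
  whenever \<open>y \<rightarrow>\<^sub>C z = 1\<close>, which forces \<open>y \<le> z\<close>.\<close>

lemma is_lub_unique: "is_lub A s \<Longrightarrow> is_lub A t \<Longrightarrow> (s::'a::order) = t"
  unfolding is_lub_def by (meson order_antisym)

lemma is_glb_unique: "is_glb A s \<Longrightarrow> is_glb A t \<Longrightarrow> (s::'a::order) = t"
  unfolding is_glb_def by (meson order_antisym)

lemma join_eqI: "is_lub {x, y} s \<Longrightarrow> join x y = s"
  unfolding join_def by (metis is_lub_unique the_equality)

lemma meet_eqI: "is_glb {x, y} s \<Longrightarrow> meet x y = s"
  unfolding meet_def by (metis is_glb_unique the_equality)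

lemma is_lub_pair_iff:
  "is_lub {x, y} s \<longleftrightarrow> x \<le> s \<and> y \<le> s \<and> (\<forall>u. x \<le> u \<longrightarrow> y \<le> u \<longrightarrow> s \<le> u)"
  unfolding is_lub_def UB_def by auto

lemma is_glb_pair_iff:
  "is_glb {x, y} s \<longleftrightarrow> s \<le> x \<and> s \<le> y \<and> (\<forall>u. u \<le> x \<longrightarrow> u \<le> y \<longrightarrow> u \<le> s)"
  unfolding is_glb_def LB_def by auto

lemma MinS_UB_eq_if_is_lub: "is_lub A s \<Longrightarrow> MinS (UB A) = {s}"
  unfolding MinS_def is_lub_def by (auto intro: order_antisym)

lemma MinS_UB_eq_singleton_iff:
  assumes "\<forall>u\<in>UB A. \<exists>m\<in>MinS (UB A). m \<le> u"
  shows "MinS (UB A) = {s} \<longleftrightarrow> is_lub A s"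
proof
  assume min: "MinS (UB A) = {s}"
  then have "s \<in> UB A" unfolding MinS_def by blast
  moreover have "s \<le> u" if "u \<in> UB A" for u
    using assms that min by auto
  ultimately show "is_lub A s" unfolding is_lub_def by blast
qed (rule MinS_UB_eq_if_is_lub)

lemma le1_singleton_iff [simp]: "le1 A {z} \<longleftrightarrow> (\<forall>a\<in>A. a \<le> z)"
  unfolding le1_def by simp

lemma le2_singleton_iff [simp]: "le2 {x} B \<longleftrightarrow> (\<forall>b\<in>B. x \<le> b)"
  unfolding le2_def by simp

locale involution_poset =
  fixes cmp :: "'a::order \<Rightarrow> 'a" and zero one :: 'a
  assumes zero_le: "zero \<le> x" and le_one: "x \<le> one"
    and cmp_antimono: "x \<le> y \<Longrightarrow> cmp y \<le> cmp x" and cmp_cmp [simp]: "cmp (cmp x) = x"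
begin

lemma cmp_le_cmp_iff [simp]: "cmp x \<le> cmp y \<longleftrightarrow> y \<le> x"
  by (metis cmp_antimono cmp_cmp)

lemma le_cmp_iff: "x \<le> cmp y \<longleftrightarrow> y \<le> cmp x"
  by (metis cmp_le_cmp_iff cmp_cmp)

lemma cmp_zero [simp]: "cmp zero = one"
  by (metis cmp_antimono cmp_cmp zero_le le_one order_antisym)

lemma is_glb_iff_is_lub_cmp: "is_glb {x, y} s \<longleftrightarrow> is_lub {cmp x, cmp y} (cmp s)"
  unfolding is_glb_pair_iff is_lub_pair_iff by (metis cmp_le_cmp_iff cmp_cmp)

lemma is_glb_zero_iff: "is_glb {x, y} zero \<longleftrightarrow> (\<forall>c. c \<le> x \<longrightarrow> c \<le> y \<longrightarrow> c = zero)"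
  unfolding is_glb_pair_iff by (auto simp: zero_le intro: order_antisym)

lemma orthocomplemented_iff: "orthocomplemented cmp one \<longleftrightarrow> (\<forall>x. is_glb {x, cmp x} zero)"
  unfolding orthocomplemented_def is_glb_iff_is_lub_cmp by (metis cmp_cmp cmp_zero)

lemma orthocomplemented_eq_zero:
  "orthocomplemented cmp one \<Longrightarrow> c \<le> x \<Longrightarrow> c \<le> cmp x \<Longrightarrow> c = zero"
  unfolding orthocomplemented_iff is_glb_zero_iff by blast

text \<open>Lub-completeness asks for maximal lower bounds; the involution turns them into
  minimal upper bounds.\<close>

lemma ex_MinS_UB_below:
  fixes a b u :: 'a
  assumes lc: "lub_complete TYPE('a)" and "u \<in> UB {a, b}"
  shows "\<exists>m\<in>MinS (UB {a, b}). m \<le> u"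
proof -
  have "cmp u \<in> LB {cmp a, cmp b}" using assms(2) unfolding UB_def LB_def by auto
  then obtain w where w: "w \<in> MaxS (LB {cmp a, cmp b})" "cmp u \<le> w"
    using lc unfolding lub_complete_def by (meson finite.emptyI finite.insertI)
  have "cmp w \<in> MinS (UB {a, b})"
    unfolding MinS_def UB_def
  proof auto
    show "a \<le> cmp w" "b \<le> cmp w" using w(1) le_cmp_iff unfolding MaxS_def LB_def by auto
    fix y assume y: "a \<le> y" "b \<le> y" "y \<le> cmp w"
    have "cmp y \<in> LB {cmp a, cmp b}" using y(1,2) unfolding LB_def by auto
    with w(1) y(3) have "cmp y = w" unfolding MaxS_def by (simp add: le_cmp_iff)
    then show "y = cmp w" by auto
  qed
  moreover have "cmp w \<le> u" using cmp_antimono[OF w(2)] by simp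
  ultimately show ?thesis by blast
qed

lemma impC_eq_one_iff:
  fixes x y :: 'a
  assumes "lub_complete TYPE('a)"
  shows "impC cmp x y = {one} \<longleftrightarrow> is_glb {x, cmp y} zero"
proof -
  have "impC cmp x y = {one} \<longleftrightarrow> is_lub {cmp x, y} one"
    unfolding impC_def
    by (rule MinS_UB_eq_singleton_iff) (blast intro: ex_MinS_UB_below[OF assms])
  then show ?thesis by (simp add: is_glb_iff_is_lub_cmp)
qed

lemma le_iff_glb_cmp_zero_if_boolean:
  assumes "boolean_algebra_poset cmp zero one"
  shows "x \<le> y \<longleftrightarrow> is_glb {x, cmp y} zero"
proof -
  have lub: "is_lub {a, b} (join a b)" for a b :: 'a
    using assms join_eqI unfolding boolean_algebra_poset_def by metis
  have glb: "is_glb {a, b} (meet a b)" for a b :: 'a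
    using assms meet_eqI unfolding boolean_algebra_poset_def by metis
  have distrib: "join a (meet b c) = meet (join a b) (join a c)"
    and compl: "join a (cmp a) = one" "meet a (cmp a) = zero" for a b c :: 'a
    using assms unfolding boolean_algebra_poset_def by auto
  show ?thesis
  proof
    assume "x \<le> y"
    have "c = zero" if "c \<le> x" "c \<le> cmp y" for c
    proof -
      have "c \<le> meet y (cmp y)"
        using glb[of y "cmp y"] that \<open>x \<le> y\<close> unfolding is_glb_pair_iff by (meson order_trans)
      then show ?thesis by (simp add: compl order_antisym zero_le)
    qed
    then show "is_glb {x, cmp y} zero" by (simp add: is_glb_zero_iff)
  next
    assume "is_glb {x, cmp y} zero"
    then have one: "join y (cmp x) = one"
      by (intro join_eqI) (simp add: is_glb_iff_is_lub_cmp insert_commute)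
    have "y = join y zero"
      by (rule sym, rule join_eqI) (simp add: is_lub_pair_iff zero_le)
    also have "\<dots> = join y (meet x (cmp x))" by (simp add: compl)
    also have "\<dots> = meet (join y x) (join y (cmp x))" by (rule distrib)
    also have "\<dots> = meet (join y x) one" by (simp only: one)
    also have "\<dots> = join y x" by (rule meet_eqI) (simp add: is_glb_pair_iff le_one)
    finally show "x \<le> y" using lub[of y x] unfolding is_lub_pair_iff by simp
  qed
qed

lemma le_iff_impC_eq_one_if_adjoint:
  assumes ortho: "orthocomplemented cmp one"
    and adjoint: "\<And>x y z. le1 (odot x y) {z} \<longleftrightarrow> le2 {x} (impC cmp y z)"
  shows "x \<le> y \<longleftrightarrow> impC cmp x y = {one}"
proof
  assume "x \<le> y"
  with ortho have "is_lub {cmp x, y} one"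
    unfolding orthocomplemented_def is_lub_pair_iff by (metis le_one order_trans)
  then show "impC cmp x y = {one}" unfolding impC_def by (rule MinS_UB_eq_if_is_lub)
next
  assume "impC cmp x y = {one}"
  then have "impC cmp (cmp y) (cmp x) = {one}" unfolding impC_def by (simp add: insert_commute)
  then have "\<forall>a\<in>odot x (cmp y). a \<le> cmp x" using adjoint le_one by simp
  moreover have "\<forall>a\<in>odot x (cmp y). a \<le> x"
    using adjoint unfolding impC_def MinS_def UB_def by simp
  ultimately have "\<forall>a\<in>odot x (cmp y). a \<le> zero"
    using orthocomplemented_eq_zero[OF ortho] by (metis order_refl)
  then have "\<forall>b\<in>impC cmp (cmp y) zero. x \<le> b" using adjoint by simp
  moreover have "y \<in> impC cmp (cmp y) zero" unfolding impC_def MinS_def UB_def by (auto simp: zero_le)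
  ultimately show "x \<le> y" by blast
qed

end

locale disjointness_poset = involution_poset cmp zero one
  for cmp :: "'a::order \<Rightarrow> 'a" and zero one +
  assumes orthogonal: "orthogonal cmp"
    and lub_complete: "lub_complete TYPE('a)"
    and le_iff_glb_cmp_zero: "x \<le> y \<longleftrightarrow> is_glb {x, cmp y} zero"
begin

lemma le_by_disjointness: "(\<And>c. c \<le> x \<Longrightarrow> c \<le> cmp y \<Longrightarrow> c = zero) \<Longrightarrow> x \<le> y"
  using le_iff_glb_cmp_zero is_glb_zero_iff by blast

lemma orthocomplemented: "orthocomplemented cmp one"
  using le_iff_glb_cmp_zero orthocomplemented_iff by blast

lemma le_cmp_self_eq_zero: "c \<le> x \<Longrightarrow> c \<le> cmp x \<Longrightarrow> c = zero"
  by (rule orthocomplemented_eq_zero[OF orthocomplemented])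

text \<open>If \<open>c \<le> m\<close> and \<open>c \<le> u'\<close>, the join \<open>s = m' \<or> c\<close> exists by orthogonality and
  \<open>s'\<close> is an upper bound of \<open>x, y\<close> below \<open>m\<close>; minimality gives \<open>s' = m\<close>, so
  \<open>c \<le> m \<and> m' = 0\<close>.\<close>

lemma MinS_UB_is_lub:
  fixes x y :: 'a
  assumes m: "m \<in> MinS (UB {x, y})"
  shows "is_lub {x, y} m"
proof -
  have ub: "x \<le> m" "y \<le> m" and minimal: "\<And>v. x \<le> v \<Longrightarrow> y \<le> v \<Longrightarrow> v \<le> m \<Longrightarrow> v = m"
    using m unfolding MinS_def UB_def by auto
  have "m \<le> u" if u: "x \<le> u" "y \<le> u" for u
  proof (rule le_by_disjointness)
    fix c assume c: "c \<le> m" "c \<le> cmp u"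
    obtain s where s: "is_lub {cmp m, c} s"
      using orthogonal c(1) unfolding orthogonal_def by (metis cmp_le_cmp_iff cmp_cmp)
    have "c \<le> cmp x" "c \<le> cmp y" using c(2) u by (meson cmp_antimono order_trans)+
    with ub s have "s \<le> cmp x" "s \<le> cmp y" unfolding is_lub_pair_iff by simp_all
    with s have "cmp s = m"
      using minimal unfolding is_lub_pair_iff by (metis le_cmp_iff cmp_cmp)
    with s have "c \<le> cmp m" unfolding is_lub_pair_iff by auto
    with c(1) show "c = zero" by (rule le_cmp_self_eq_zero)
  qed
  with ub show ?thesis unfolding is_lub_pair_iff by blast
qed

lemma is_lub_join: "is_lub {x, y :: 'a} (join x y)"
proof -
  have "one \<in> UB {x, y}" by (simp add: UB_def le_one)
  then obtain m where "m \<in> MinS (UB {x, y})" using ex_MinS_UB_below[OF lub_complete] by blast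
  then show ?thesis using MinS_UB_is_lub join_eqI by metis
qed

lemma is_glb_meet: "is_glb {x, y :: 'a} (meet x y)"
  using is_lub_join[of "cmp x" "cmp y"] is_glb_iff_is_lub_cmp meet_eqI by (metis cmp_cmp)

lemma le_join1: "x \<le> join x (y :: 'a)" and le_join2: "y \<le> join (x :: 'a) y"
  and join_least: "x \<le> (u :: 'a) \<Longrightarrow> y \<le> u \<Longrightarrow> join x y \<le> u"
  using is_lub_join unfolding is_lub_pair_iff by blast+

lemma meet_le1: "meet x (y :: 'a) \<le> x" and meet_le2: "meet (x :: 'a) y \<le> y"
  and meet_greatest: "(u :: 'a) \<le> x \<Longrightarrow> u \<le> y \<Longrightarrow> u \<le> meet x y"
  using is_glb_meet unfolding is_glb_pair_iff by blast+

lemma le_of_le_join_of_le_cmp: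
  assumes "c \<le> join x y" "c \<le> cmp x"
  shows "c \<le> y"
proof (rule le_by_disjointness)
  fix d assume d: "d \<le> c" "d \<le> cmp y"
  then have "join x y \<le> cmp d"
    using assms(2) by (meson join_least le_cmp_iff order_trans)
  then have "d \<le> cmp (join x y)" by (simp add: le_cmp_iff)
  moreover have "d \<le> join x y" using d(1) assms(1) by (rule order_trans)
  ultimately show "d = zero" using le_cmp_self_eq_zero by blast
qed

lemma meet_le_iff_le_join_cmp: "meet x y \<le> z \<longleftrightarrow> x \<le> join (cmp y) z"
proof
  assume le: "meet x y \<le> z"
  show "x \<le> join (cmp y) z"
  proof (rule le_by_disjointness)
    fix c assume c: "c \<le> x" "c \<le> cmp (join (cmp y) z)"
    then have "c \<le> y" "c \<le> cmp z"
      using le_join1 le_join2 by (metis cmp_antimono cmp_cmp order_trans)+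
    with c(1) le have "c \<le> z" by (meson meet_greatest order_trans)
    then show "c = zero" using \<open>c \<le> cmp z\<close> by (rule le_cmp_self_eq_zero)
  qed
next
  assume "x \<le> join (cmp y) z"
  then show "meet x y \<le> z"
    using meet_le1 meet_le2 le_of_le_join_of_le_cmp by (metis cmp_cmp order_trans)
qed

lemma join_meet_distrib: "join x (meet y z) = meet (join x y) (join x (z :: 'a))"
proof (rule order_antisym)
  show "join x (meet y z) \<le> meet (join x y) (join x z)"
    by (intro join_least meet_greatest le_join1
        order_trans[OF meet_le1 le_join2] order_trans[OF meet_le2 le_join2])
  show "meet (join x y) (join x z) \<le> join x (meet y z)"
  proof (rule le_by_disjointness)
    fix c assume c: "c \<le> meet (join x y) (join x z)" "c \<le> cmp (join x (meet y z))"
    have "c \<le> cmp x" "c \<le> cmp (meet y z)"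
      using c(2) le_join1 le_join2 cmp_antimono order_trans by blast+
    moreover have "c \<le> join x y" "c \<le> join x z"
      using c(1) meet_le1 meet_le2 order_trans by blast+
    ultimately have "c \<le> meet y z" "c \<le> cmp (meet y z)"
      using le_of_le_join_of_le_cmp meet_greatest by blast+
    then show "c = zero" by (rule le_cmp_self_eq_zero)
  qed
qed

lemma boolean_algebra: "boolean_algebra_poset cmp zero one"
proof -
  have join_cmp: "join x (cmp x) = one" for x
    using orthocomplemented unfolding orthocomplemented_def by (blast intro: join_eqI)
  have meet_cmp: "meet x (cmp x) = zero" for x
    by (rule meet_eqI) (use le_cmp_self_eq_zero in \<open>blast intro: is_glb_zero_iff[THEN iffD2]\<close>)
  show ?thesis unfolding boolean_algebra_poset_def
    using is_lub_join is_glb_meet join_meet_distrib join_cmp meet_cmp by (intro conjI allI) blast+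
qed

lemma ex_adjoint_impC: "\<exists>odot. \<forall>x y z. le1 (odot x y) {z} \<longleftrightarrow> le2 {x} (impC cmp y z)"
proof -
  have "impC cmp y z = {join (cmp y) z}" for y z
    unfolding impC_def by (rule MinS_UB_eq_if_is_lub[OF is_lub_join])
  then have "le1 {meet x y} {z} \<longleftrightarrow> le2 {x} (impC cmp y z)" for x y z
    by (simp add: meet_le_iff_le_join_cmp)
  then show ?thesis by (intro exI[of _ "\<lambda>x y. {meet x y}"]) simp
qed

end

theorem theorem3:
  fixes cmp :: "'a::order \<Rightarrow> 'a" and zero one :: 'a
  assumes "bounded_inv_poset cmp zero one"
    and "orthogonal cmp"
    and "lub_complete TYPE('a)"
  shows "(boolean_algebra_poset cmp zero one
          \<longleftrightarrow> (\<forall>x y. x \<le> y \<longleftrightarrow> impC cmp x y = {one}))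
       \<and> ((\<forall>x y. x \<le> y \<longleftrightarrow> impC cmp x y = {one})
          \<longleftrightarrow> (orthocomplemented cmp one \<and>
               (\<exists>odot :: 'a \<Rightarrow> 'a \<Rightarrow> 'a set. \<forall>x y z.
                  le1 (odot x y) {z} \<longleftrightarrow> le2 {x} (impC cmp y z))))"
proof -
  interpret involution_poset cmp zero one
    using assms(1) unfolding bounded_inv_poset_def by unfold_locales auto
  let ?ii = "\<forall>x y. x \<le> y \<longleftrightarrow> impC cmp x y = {one}"
  let ?criterion = "\<forall>x y. x \<le> y \<longleftrightarrow> is_glb {x, cmp y} zero"
  let ?adjoint = "\<exists>odot :: 'a \<Rightarrow> 'a \<Rightarrow> 'a set. \<forall>x y z.
                    le1 (odot x y) {z} \<longleftrightarrow> le2 {x} (impC cmp y z)"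
  have ii_iff_criterion: "?ii \<longleftrightarrow> ?criterion"
    using impC_eq_one_iff[OF assms(3)] by simp
  have i_ii: "?ii" if "boolean_algebra_poset cmp zero one"
    using ii_iff_criterion le_iff_glb_cmp_zero_if_boolean[OF that] by blast
  have iii_ii: "?ii" if "orthocomplemented cmp one" and ?adjoint
    using that le_iff_impC_eq_one_if_adjoint by blast
  have ii_i_iii: "boolean_algebra_poset cmp zero one \<and> orthocomplemented cmp one \<and> ?adjoint"
    if ?ii
  proof -
    interpret disjointness_poset cmp zero one
      using assms(2,3) that ii_iff_criterion by unfold_locales auto
    show ?thesis using boolean_algebra orthocomplemented ex_adjoint_impC by blast
  qed
  show ?thesis using i_ii iii_ii ii_i_iii by blast
qed

end
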